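(* Let $M := e_1e_2^\top + e_2e_1^\top\in\mathbb{R}^{d\times d}$. Assume $\alpha \le \frac12$, $a_0\ne0$, $|a_0|\le 1$, $w_0$ a unit vector, and $\mathrm{sign}(a_0) = \mathrm{sign}(q_0)$. Consider the updates \[ a_{t+1} = \mathrm{clip}_{[-1,1]}\big(a_t + \tfrac\alpha2 q_t\big),\quad w_{t+1} = \frac{w_t + \alpha a_t Mw_t}{\|w_t + \alpha a_t M w_t\|_2},\quad q_t := w_t^\top M w_t. \] Let $u_a := \frac{e_1 + \mathrm{sign}(a_0)e_2}{\sqrt2}$, $\gamma_t := |\langle w_t, u_a\rangle|$ and $r_t := \frac{\sqrt{1-\gamma_t^2}}{\gamma_t}$. Then: (1) for all $t\ge0$, $\mathrm{sign}(a_t) = \mathrm{sign}(q_t) = \mathrm{sign}(a_0)$, and $|a_t|$ is non-decreasing; (2) for all $t\ge0$, $r_{t+1} \le \frac{1}{1+\alpha|a_t|}r_t \le \frac{1}{1+\alpha|a_0|}r_t$. Consequently, for any $\varepsilon\in(0,1/2)$, after \[ T_2 := \left\lceil \frac{2}{\alpha|a_0|}\log\Big(\frac{1}{\gamma_0^2\varepsilon}\Big)\right\rceil \] steps we have $\gamma_{T_2}^2 \ge 1-\varepsilon$.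
   Context: $M = \mathbb{E}[yxx^\top]$ is the population moment matrix for $x$ uniform on $\{\pm1\}^d$ and $y = x_1x_2$; these are the Phase-2 (population) projected gradient updates for $f(x) = \frac12 a(w^\top x)^2$ under correlation loss. *)

theory Defs
  imports "HOL-Analysis.Analysis"
begin

definition ebasis :: "'n::finite \<Rightarrow> real^'n" where
  "ebasis k = axis k 1"

text \<open>M = e_1 e_2^T + e_2 e_1^T, where i1, i2 are the indices of the first two coordinates.\<close>
definition Mmat :: "'n::finite \<Rightarrow> 'n \<Rightarrow> real^'n^'n" where
  "Mmat i1 i2 = (\<chi> i j. ebasis i1 $ i * ebasis i2 $ j + ebasis i2 $ i * ebasis i1 $ j)"

definition clip :: "real \<Rightarrow> real \<Rightarrow> real \<Rightarrow> real" where
  "clip lo hi x = max lo (min hi x)"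

end

theory Submission
  imports Defs
begin

(* Write s = sgn a_0 and u_+, u_- = (e_i1 +- s e_i2)/sqrt 2. Then M u_+ = s u_+, M u_- = -s u_-,
   and M vanishes on the orthogonal complement of e_i1, e_i2. So while a_t has sign s, the
   unnormalised step multiplies the u_+ coordinate of w_t by 1 + alpha |a_t|, the u_- coordinate
   by 1 - alpha |a_t|, and fixes the rest; hence the squared tangent of the angle between w_t and
   u_+ (which is r_t^2) shrinks by the factor (1 + alpha |a_t|)^2. Since s q_t is the u_+ mass
   minus the u_- mass, q_t keeps the sign s, so a_t moves away from 0 and keeps its sign as well.
   The step count comes from (1 + k)^T >= exp (k T / 2) for k <= 1/2. *)

definition diag_mass :: "'n::finite \<Rightarrow> 'n \<Rightarrow> real \<Rightarrow> real^'n \<Rightarrow> real" where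
  "diag_mass i1 i2 s v = (v $ i1 + s * v $ i2)\<^sup>2 / 2"

definition off_diag_mass :: "'n::finite \<Rightarrow> 'n \<Rightarrow> real^'n \<Rightarrow> real" where
  "off_diag_mass i1 i2 v = (\<Sum>i\<in>-{i1, i2}. (v $ i)\<^sup>2)"

(* For unit v, the squared tangent of the angle between v and (e_i1 + s e_i2)/sqrt 2:
   the square of the paper's r_t. *)
definition diag_tan2 :: "'n::finite \<Rightarrow> 'n \<Rightarrow> real \<Rightarrow> real^'n \<Rightarrow> real" where
  "diag_tan2 i1 i2 s v =
     (diag_mass i1 i2 (-s) v + off_diag_mass i1 i2 v) / diag_mass i1 i2 s v"

lemma diag_mass_nonneg: "0 \<le> diag_mass i1 i2 s v"
  by (simp add: diag_mass_def)

lemma off_diag_mass_nonneg: "0 \<le> off_diag_mass i1 i2 v"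
  by (simp add: off_diag_mass_def sum_nonneg)

lemma diag_tan2_nonneg: "0 \<le> diag_tan2 i1 i2 s v"
  by (simp add: diag_tan2_def diag_mass_nonneg off_diag_mass_nonneg)

lemma Mmat_mult_vec_nth:
  assumes "i1 \<noteq> i2"
  shows "(Mmat i1 i2 *v v) $ i = (if i = i1 then v $ i2 else if i = i2 then v $ i1 else 0)"
  using assms unfolding Mmat_def matrix_vector_mult_def ebasis_def axis_def
  by (simp add: if_distrib[of "\<lambda>x. x * _"] sum.delta cong: if_cong)

lemma inner_Mmat_mult_vec:
  assumes "i1 \<noteq> i2"
  shows "v \<bullet> (Mmat i1 i2 *v v) = 2 * v $ i1 * v $ i2"
proof -
  have "v \<bullet> (Mmat i1 i2 *v v) = (\<Sum>i\<in>UNIV. v $ i * (Mmat i1 i2 *v v) $ i)"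
    by (simp add: inner_vec_def)
  also have "\<dots> = (\<Sum>i\<in>{i1, i2}. v $ i * (Mmat i1 i2 *v v) $ i)"
    using assms by (intro sum.mono_neutral_right) (auto simp: Mmat_mult_vec_nth)
  finally show ?thesis
    using assms by (simp add: Mmat_mult_vec_nth)
qed

lemma norm_sq_eq_diag_masses:
  assumes "i1 \<noteq> i2" and "s\<^sup>2 = 1"
  shows "(norm v)\<^sup>2 = diag_mass i1 i2 s v + diag_mass i1 i2 (-s) v + off_diag_mass i1 i2 v"
proof -
  have "(norm v)\<^sup>2 = (\<Sum>i\<in>UNIV. (v $ i)\<^sup>2)"
    unfolding power2_norm_eq_inner inner_vec_def by (simp add: power2_eq_square)
  also have "\<dots> = off_diag_mass i1 i2 v + (\<Sum>i\<in>{i1, i2}. (v $ i)\<^sup>2)"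
    unfolding off_diag_mass_def Compl_eq_Diff_UNIV
    by (rule sum.subset_diff) auto
  moreover have "diag_mass i1 i2 s v + diag_mass i1 i2 (-s) v = (v $ i1)\<^sup>2 + s\<^sup>2 * (v $ i2)\<^sup>2"
    by (simp add: diag_mass_def field_simps power2_eq_square)
  ultimately show ?thesis
    using assms by simp
qed

lemma Mmat_quadratic_form_eq_diag_masses:
  assumes "i1 \<noteq> i2"
  shows "s * (v \<bullet> (Mmat i1 i2 *v v)) = diag_mass i1 i2 s v - diag_mass i1 i2 (-s) v"
proof -
  have "diag_mass i1 i2 s v - diag_mass i1 i2 (-s) v = 2 * s * v $ i1 * v $ i2"
    by (simp add: diag_mass_def field_simps power2_eq_square)
  then show ?thesis
    using assms(1) by (simp add: inner_Mmat_mult_vec)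
qed

lemma inner_diag_axis:
  assumes "i1 \<noteq> i2"
  shows "\<bar>v \<bullet> ((1 / sqrt 2) *\<^sub>R (ebasis i1 + s *\<^sub>R ebasis i2))\<bar> = sqrt (diag_mass i1 i2 s v)"
proof -
  have "v \<bullet> ((1 / sqrt 2) *\<^sub>R (ebasis i1 + s *\<^sub>R ebasis i2)) = (v $ i1 + s * v $ i2) / sqrt 2"
    using assms by (simp add: ebasis_def inner_add_right inner_axis add_divide_distrib)
  then show ?thesis
    by (simp add: diag_mass_def real_sqrt_divide)
qed

lemma diag_mass_scaleR: "diag_mass i1 i2 s (c *\<^sub>R v) = c\<^sup>2 * diag_mass i1 i2 s v"
  by (simp add: diag_mass_def power2_eq_square algebra_simps)

lemma off_diag_mass_scaleR: "off_diag_mass i1 i2 (c *\<^sub>R v) = c\<^sup>2 * off_diag_mass i1 i2 v"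
  by (simp add: off_diag_mass_def power_mult_distrib sum_distrib_left)

lemma diag_tan2_scaleR:
  assumes "c \<noteq> 0"
  shows "diag_tan2 i1 i2 s (c *\<^sub>R v) = diag_tan2 i1 i2 s v"
  using assms by (simp add: diag_tan2_def diag_mass_scaleR off_diag_mass_scaleR
      flip: distrib_left)

lemma diag_mass_power_step:
  assumes "i1 \<noteq> i2" and "s\<^sup>2 = 1"
  shows "diag_mass i1 i2 s (v + c *\<^sub>R (Mmat i1 i2 *v v)) = (1 + s * c)\<^sup>2 * diag_mass i1 i2 s v"
proof -
  have "v $ i1 + c * v $ i2 + s * (v $ i2 + c * v $ i1) = (1 + s * c) * (v $ i1 + s * v $ i2)"
    using assms(2) by (simp add: algebra_simps power2_eq_square)
  then show ?thesis
    using assms(1) by (simp add: diag_mass_def Mmat_mult_vec_nth power_mult_distrib)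
qed

lemma off_diag_mass_power_step:
  assumes "i1 \<noteq> i2"
  shows "off_diag_mass i1 i2 (v + c *\<^sub>R (Mmat i1 i2 *v v)) = off_diag_mass i1 i2 v"
  using assms unfolding off_diag_mass_def by (intro sum.cong) (auto simp: Mmat_mult_vec_nth)

lemma diag_mass_gap_power_step:
  assumes "i1 \<noteq> i2" and "s\<^sup>2 = 1" and "0 \<le> s * c"
    and "diag_mass i1 i2 (-s) v < diag_mass i1 i2 s v"
  shows "diag_mass i1 i2 (-s) (v + c *\<^sub>R (Mmat i1 i2 *v v))
    < diag_mass i1 i2 s (v + c *\<^sub>R (Mmat i1 i2 *v v))"
proof -
  have "(1 - s * c)\<^sup>2 * diag_mass i1 i2 (-s) v \<le> (1 + s * c)\<^sup>2 * diag_mass i1 i2 (-s) v"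
    using assms(3) by (intro mult_right_mono diag_mass_nonneg) (simp add: power2_eq_square algebra_simps)
  also have "\<dots> < (1 + s * c)\<^sup>2 * diag_mass i1 i2 s v"
    using assms(3,4) by (intro mult_strict_left_mono) auto
  finally show ?thesis
    using assms(1,2) by (simp add: diag_mass_power_step)
qed

lemma diag_tan2_power_step:
  assumes "i1 \<noteq> i2" and "s\<^sup>2 = 1" and "0 \<le> s * c" and "s * c \<le> 2"
    and "0 < diag_mass i1 i2 s v"
  shows "diag_tan2 i1 i2 s (v + c *\<^sub>R (Mmat i1 i2 *v v)) \<le> diag_tan2 i1 i2 s v / (1 + s * c)\<^sup>2"
proof -
  define Q where "Q = diag_mass i1 i2 (-s) v"
  define Z where "Z = off_diag_mass i1 i2 v"
  have "(1 - s * c)\<^sup>2 \<le> 1"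
    using assms(3,4) by (subst abs_square_le_1) auto
  then have "(1 - s * c)\<^sup>2 * Q + Z \<le> Q + Z"
    unfolding Q_def by (intro add_right_mono mult_left_le_one_le diag_mass_nonneg) auto
  then have "((1 - s * c)\<^sup>2 * Q + Z) / ((1 + s * c)\<^sup>2 * diag_mass i1 i2 s v)
      \<le> (Q + Z) / ((1 + s * c)\<^sup>2 * diag_mass i1 i2 s v)"
    using assms(3,5) by (intro divide_right_mono) auto
  then show ?thesis
    using assms(1,2) by (simp add: diag_tan2_def diag_mass_power_step off_diag_mass_power_step
        Q_def Z_def mult.commute)
qed

lemma abs_clip_le: "\<bar>clip (-1) 1 x\<bar> \<le> 1"
  by (simp add: clip_def)

lemma clip_step_same_sign:
  assumes "x \<noteq> 0" and "\<bar>x\<bar> \<le> 1" and "sgn y = sgn x"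
  shows "sgn (clip (-1) 1 (x + y)) = sgn x" and "\<bar>x\<bar> \<le> \<bar>clip (-1) 1 (x + y)\<bar>"
  using assms by (auto simp: clip_def sgn_if split: if_splits)

lemma inverse_le_one_plus_pow_ceiling:
  fixes k b :: real
  assumes "0 < k" and "k \<le> 1/2" and "0 < b"
  shows "1 / b \<le> (1 + k) ^ nat \<lceil>2 / k * ln (1 / b)\<rceil>"
proof -
  define T where "T = nat \<lceil>2 / k * ln (1 / b)\<rceil>"
  have "k / 2 \<le> k - k\<^sup>2"
    using assms(1,2) by (simp add: power2_eq_square)
  also have "\<dots> \<le> ln (1 + k)"
    using assms(1,2) by (intro ln_one_plus_pos_lower_bound) auto
  finally have "real T * (k / 2) \<le> real T * ln (1 + k)"
    by (intro mult_left_mono) auto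
  moreover have "ln (1 / b) \<le> real T * (k / 2)"
    using real_nat_ceiling_ge[of "2 / k * ln (1 / b)"] assms(1) by (simp add: T_def field_simps)
  ultimately have "ln (1 / b) \<le> ln ((1 + k) ^ T)"
    using assms(1) by (simp add: ln_realpow)
  then show ?thesis
    using assms by (simp add: T_def)
qed

locale phase2_dynamics =
  fixes i1 i2 :: "'n::finite"
    and \<alpha> :: real
    and a :: "nat \<Rightarrow> real"
    and w :: "nat \<Rightarrow> real^'n"
    and q \<gamma> r :: "nat \<Rightarrow> real"
    and u :: "real^'n"
  assumes i12: "i1 \<noteq> i2"
    and alpha_pos: "0 < \<alpha>" and alpha_le: "\<alpha> \<le> 1/2"
    and a0_ne: "a 0 \<noteq> 0" and a0_le: "\<bar>a 0\<bar> \<le> 1"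
    and w0_unit: "norm (w 0) = 1"
    and q_def: "\<And>t. q t = w t \<bullet> (Mmat i1 i2 *v w t)"
    and sign0: "sgn (a 0) = sgn (q 0)"
    and a_step: "\<And>t. a (Suc t) = clip (-1) 1 (a t + \<alpha> / 2 * q t)"
    and w_step: "\<And>t. w (Suc t) =
        (w t + (\<alpha> * a t) *\<^sub>R (Mmat i1 i2 *v w t)) /\<^sub>R
          norm (w t + (\<alpha> * a t) *\<^sub>R (Mmat i1 i2 *v w t))"
    and u_def: "u = (1 / sqrt 2) *\<^sub>R (ebasis i1 + sgn (a 0) *\<^sub>R ebasis i2)"
    and gamma_def: "\<And>t. \<gamma> t = \<bar>w t \<bullet> u\<bar>"
    and r_def: "\<And>t. r t = sqrt (1 - (\<gamma> t)\<^sup>2) / \<gamma> t"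
begin

abbreviation s :: real where
  "s \<equiv> sgn (a 0)"

abbreviation aligned :: "nat \<Rightarrow> real" where
  "aligned t \<equiv> diag_mass i1 i2 s (w t)"

abbreviation antialigned :: "nat \<Rightarrow> real" where
  "antialigned t \<equiv> diag_mass i1 i2 (-s) (w t)"

abbreviation tan2 :: "nat \<Rightarrow> real" where
  "tan2 t \<equiv> diag_tan2 i1 i2 s (w t)"

lemma s_sq: "s\<^sup>2 = 1"
  using a0_ne by (simp add: sgn_if)

lemma sgn_eq_s_iff: "sgn x = s \<longleftrightarrow> 0 < s * x"
  using a0_ne by (auto simp: sgn_if)

lemma s_mult_eq_abs: "sgn x = s \<Longrightarrow> s * x = \<bar>x\<bar>"
  by (metis abs_sgn mult.commute)

lemma s_mult_q: "s * q t = aligned t - antialigned t"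
  using i12 by (simp add: q_def Mmat_quadratic_form_eq_diag_masses)

lemma gamma_eq: "\<gamma> t = sqrt (aligned t)"
  unfolding gamma_def u_def by (rule inner_diag_axis[OF i12])

definition w_unnormalized :: "nat \<Rightarrow> real^'n" where
  "w_unnormalized t = w t + (\<alpha> * a t) *\<^sub>R (Mmat i1 i2 *v w t)"

lemma w_Suc_eq: "w (Suc t) = inverse (norm (w_unnormalized t)) *\<^sub>R w_unnormalized t"
  by (simp add: w_step w_unnormalized_def divide_inverse_commute)

lemma a_Suc_step:
  assumes "sgn (a t) = s" and "\<bar>a t\<bar> \<le> 1" and "sgn (q t) = s"
  shows "sgn (a (Suc t)) = s" and "\<bar>a t\<bar> \<le> \<bar>a (Suc t)\<bar>"
proof -
  have "sgn (\<alpha> / 2 * q t) = sgn (a t)"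
    using alpha_pos assms(1,3) by (simp add: sgn_mult)
  moreover have "a t \<noteq> 0"
    using assms(1) a0_ne by (auto simp: sgn_0_0)
  ultimately show "sgn (a (Suc t)) = s" and "\<bar>a t\<bar> \<le> \<bar>a (Suc t)\<bar>"
    unfolding a_step using assms(1,2) clip_step_same_sign by auto
qed

(* The second conjunct says sgn (q t) = s, by s_mult_q. *)
definition invariant :: "nat \<Rightarrow> bool" where
  "invariant t \<longleftrightarrow>
     norm (w t) = 1 \<and> antialigned t < aligned t \<and> sgn (a t) = s \<and> \<bar>a t\<bar> \<le> 1"

lemma invariant_0: "invariant 0"
proof -
  have "0 < s * q 0"
    using sign0 sgn_eq_s_iff by metis
  then show ?thesis
    using w0_unit a0_le s_mult_q[of 0] by (simp add: invariant_def)
qed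

lemma invariant_Suc:
  assumes "invariant t"
  shows "invariant (Suc t)"
proof -
  let ?W = "w_unnormalized t"
  have sgn_q: "sgn (q t) = s"
    using assms s_mult_q[of t] by (simp add: invariant_def sgn_eq_s_iff)
  have sgn_a: "sgn (a t) = s"
    using assms by (simp add: invariant_def)
  have "sgn (a (Suc t)) = s"
    using a_Suc_step assms sgn_q by (simp add: invariant_def)
  moreover have "\<bar>a (Suc t)\<bar> \<le> 1"
    by (simp add: a_step abs_clip_le)
  moreover have "0 \<le> s * (\<alpha> * a t)"
    using alpha_pos s_mult_eq_abs[OF sgn_a] by (simp add: mult.left_commute)
  then have gap: "diag_mass i1 i2 (-s) ?W < diag_mass i1 i2 s ?W"
    using assms i12 s_sq by (simp add: invariant_def w_unnormalized_def diag_mass_gap_power_step)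
  then have "?W \<noteq> 0"
    using diag_mass_nonneg[of i1 i2 "-s" 0] by (auto simp: diag_mass_def)
  then have "norm (w (Suc t)) = 1" and "antialigned (Suc t) < aligned (Suc t)"
    using gap by (simp_all add: w_Suc_eq diag_mass_scaleR)
  ultimately show ?thesis
    by (simp add: invariant_def)
qed

lemma invariant_holds: "invariant t"
  by (induction t) (simp_all add: invariant_0 invariant_Suc)

lemma sgn_a: "sgn (a t) = s"
  using invariant_holds[of t] by (simp add: invariant_def)

lemma sgn_q: "sgn (q t) = s"
  using invariant_holds[of t] s_mult_q[of t] by (simp add: invariant_def sgn_eq_s_iff)

lemma alpha_abs_a_le: "\<alpha> * \<bar>a t\<bar> \<le> 1/2"
  using invariant_holds[of t] alpha_pos alpha_le mult_mono[of \<alpha> "1/2" "\<bar>a t\<bar>" 1]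
  by (simp add: invariant_def)

lemma abs_a_le_Suc: "\<bar>a t\<bar> \<le> \<bar>a (Suc t)\<bar>"
  using a_Suc_step(2) sgn_a sgn_q invariant_holds[of t] by (simp add: invariant_def)

lemma abs_a0_le: "\<bar>a 0\<bar> \<le> \<bar>a t\<bar>"
  by (induction t) (auto intro: order_trans abs_a_le_Suc)

lemma aligned_pos: "0 < aligned t"
  using invariant_holds[of t] diag_mass_nonneg[of i1 i2 "-s" "w t"] by (simp add: invariant_def)

lemma tan2_Suc_le: "tan2 (Suc t) \<le> tan2 t / (1 + \<alpha> * \<bar>a t\<bar>)\<^sup>2"
proof -
  have k_eq: "s * (\<alpha> * a t) = \<alpha> * \<bar>a t\<bar>"
    using s_mult_eq_abs[OF sgn_a] by (simp add: mult.left_commute)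
  have "w_unnormalized t \<noteq> 0"
    using invariant_holds[of "Suc t"] w_Suc_eq[of t] by (auto simp: invariant_def)
  then have "tan2 (Suc t) = diag_tan2 i1 i2 s (w_unnormalized t)"
    by (simp add: w_Suc_eq diag_tan2_scaleR)
  also have "\<dots> \<le> tan2 t / (1 + s * (\<alpha> * a t))\<^sup>2"
    unfolding w_unnormalized_def using i12 s_sq alpha_pos aligned_pos alpha_abs_a_le[of t]
    by (intro diag_tan2_power_step) (simp_all only: k_eq, auto)
  finally show ?thesis
    by (simp only: k_eq)
qed

lemma tan2_eq: "tan2 t = (1 - aligned t) / aligned t"
  using invariant_holds[of t] norm_sq_eq_diag_masses[OF i12 s_sq, of "w t"]
  by (simp add: invariant_def diag_tan2_def)

lemma r_eq: "r t = sqrt (tan2 t)"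
  using aligned_pos[of t] diag_mass_nonneg
  by (simp add: r_def gamma_eq tan2_eq real_sqrt_divide)

lemma gamma_sq_eq: "(\<gamma> t)\<^sup>2 = 1 / (1 + tan2 t)"
  using aligned_pos[of t] by (simp add: gamma_eq tan2_eq field_simps)

lemma r_Suc_le: "r (Suc t) \<le> r t / (1 + \<alpha> * \<bar>a t\<bar>)"
proof -
  have "r (Suc t) \<le> sqrt (tan2 t / (1 + \<alpha> * \<bar>a t\<bar>)\<^sup>2)"
    unfolding r_eq by (rule real_sqrt_le_mono[OF tan2_Suc_le])
  also have "\<dots> = r t / (1 + \<alpha> * \<bar>a t\<bar>)"
    using alpha_pos by (simp add: r_eq real_sqrt_divide)
  finally show ?thesis .
qed

lemma one_plus_alpha_abs_a_pos: "0 < 1 + \<alpha> * \<bar>a t\<bar>"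
  using alpha_pos by (simp add: add_pos_nonneg)

lemma alpha_abs_a0_le: "\<alpha> * \<bar>a 0\<bar> \<le> \<alpha> * \<bar>a t\<bar>"
  using alpha_pos abs_a0_le by (simp add: mult_left_mono)

lemma r_div_le: "r t / (1 + \<alpha> * \<bar>a t\<bar>) \<le> r t / (1 + \<alpha> * \<bar>a 0\<bar>)"
  using alpha_abs_a0_le[of t]
  by (intro divide_left_mono mult_pos_pos one_plus_alpha_abs_a_pos) (simp_all add: r_eq diag_tan2_nonneg)

lemma tan2_le_geometric: "tan2 t \<le> tan2 0 / (1 + \<alpha> * \<bar>a 0\<bar>) ^ t"
proof (induction t)
  case (Suc t)
  have "1 + \<alpha> * \<bar>a 0\<bar> \<le> 1 + \<alpha> * \<bar>a t\<bar>"
    using alpha_abs_a0_le by simp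
  also have "\<dots> \<le> (1 + \<alpha> * \<bar>a t\<bar>)\<^sup>2"
    using alpha_pos by (intro self_le_power) auto
  finally have "tan2 t / (1 + \<alpha> * \<bar>a t\<bar>)\<^sup>2 \<le> tan2 t / (1 + \<alpha> * \<bar>a 0\<bar>)"
    by (intro divide_left_mono diag_tan2_nonneg mult_pos_pos zero_less_power one_plus_alpha_abs_a_pos)
  then have "tan2 (Suc t) \<le> tan2 t / (1 + \<alpha> * \<bar>a 0\<bar>)"
    using tan2_Suc_le[of t] by linarith
  also have "\<dots> \<le> tan2 0 / (1 + \<alpha> * \<bar>a 0\<bar>) ^ t / (1 + \<alpha> * \<bar>a 0\<bar>)"
    using Suc.IH one_plus_alpha_abs_a_pos[of 0] by (intro divide_right_mono) auto
  finally show ?case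
    by (simp only: power_Suc2 divide_divide_eq_left)
qed simp

lemma gamma_sq_ge:
  assumes "0 < \<epsilon>"
  shows "(\<gamma> (nat \<lceil>2 / (\<alpha> * \<bar>a 0\<bar>) * ln (1 / ((\<gamma> 0)\<^sup>2 * \<epsilon>))\<rceil>))\<^sup>2 \<ge> 1 - \<epsilon>"
    (is "(\<gamma> ?T)\<^sup>2 \<ge> _")
proof -
  have g0: "0 < (\<gamma> 0)\<^sup>2"
    using aligned_pos[of 0] by (simp add: gamma_eq)
  have "1 / ((\<gamma> 0)\<^sup>2 * \<epsilon>) \<le> (1 + \<alpha> * \<bar>a 0\<bar>) ^ ?T"
    using alpha_pos a0_ne assms g0 alpha_abs_a_le[of 0]
    by (intro inverse_le_one_plus_pow_ceiling) auto
  moreover have "tan2 0 \<le> 1 / (\<gamma> 0)\<^sup>2"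
    using gamma_sq_eq[of 0] by simp
  ultimately have "tan2 0 / (1 + \<alpha> * \<bar>a 0\<bar>) ^ ?T
      \<le> (1 / (\<gamma> 0)\<^sup>2) / (1 / ((\<gamma> 0)\<^sup>2 * \<epsilon>))"
    using g0 assms diag_tan2_nonneg by (intro frac_le) auto
  then have "tan2 ?T \<le> \<epsilon>"
    using tan2_le_geometric[of ?T] g0 by simp
  then have "1 / (1 + \<epsilon>) \<le> (\<gamma> ?T)\<^sup>2"
    unfolding gamma_sq_eq using assms
    by (intro divide_left_mono) (auto simp: diag_tan2_nonneg intro!: mult_pos_pos add_pos_nonneg)
  moreover have "1 - \<epsilon> \<le> 1 / (1 + \<epsilon>)"
    using assms by (simp add: field_simps)
  ultimately show ?thesis by linarith
qed

end

theorem lemma10: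
  fixes i1 i2 :: "'n::finite"
    and \<alpha> :: real
    and a :: "nat \<Rightarrow> real"
    and w :: "nat \<Rightarrow> real^'n"
    and q \<gamma> r :: "nat \<Rightarrow> real"
    and u :: "real^'n"
  assumes i12: "i1 \<noteq> i2"
    and alpha_pos: "0 < \<alpha>" and alpha_le: "\<alpha> \<le> 1/2"
    and a0_ne: "a 0 \<noteq> 0" and a0_le: "\<bar>a 0\<bar> \<le> 1"
    and w0_unit: "norm (w 0) = 1"
    and q_def: "\<And>t. q t = w t \<bullet> (Mmat i1 i2 *v w t)"
    and sign0: "sgn (a 0) = sgn (q 0)"
    and a_step: "\<And>t. a (Suc t) = clip (-1) 1 (a t + \<alpha> / 2 * q t)"
    and w_step: "\<And>t. w (Suc t) =
        (w t + (\<alpha> * a t) *\<^sub>R (Mmat i1 i2 *v w t)) /\<^sub>R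
          norm (w t + (\<alpha> * a t) *\<^sub>R (Mmat i1 i2 *v w t))"
    and u_def: "u = (1 / sqrt 2) *\<^sub>R (ebasis i1 + sgn (a 0) *\<^sub>R ebasis i2)"
    and gamma_def: "\<And>t. \<gamma> t = \<bar>w t \<bullet> u\<bar>"
    and r_def: "\<And>t. r t = sqrt (1 - (\<gamma> t)\<^sup>2) / \<gamma> t"
  shows "(\<forall>t. sgn (a t) = sgn (a 0) \<and> sgn (q t) = sgn (a 0) \<and> \<bar>a t\<bar> \<le> \<bar>a (Suc t)\<bar>)
    \<and> (\<forall>t. r (Suc t) \<le> r t / (1 + \<alpha> * \<bar>a t\<bar>)
           \<and> r t / (1 + \<alpha> * \<bar>a t\<bar>) \<le> r t / (1 + \<alpha> * \<bar>a 0\<bar>))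
    \<and> (\<forall>\<epsilon>. 0 < \<epsilon> \<and> \<epsilon> < 1/2 \<longrightarrow>
          (\<gamma> (nat \<lceil>2 / (\<alpha> * \<bar>a 0\<bar>) * ln (1 / ((\<gamma> 0)\<^sup>2 * \<epsilon>))\<rceil>))\<^sup>2 \<ge> 1 - \<epsilon>)"
proof -
  interpret phase2_dynamics i1 i2 \<alpha> a w q \<gamma> r u
    using assms by (simp add: phase2_dynamics_def)
  show ?thesis
    using sgn_a sgn_q abs_a_le_Suc r_Suc_le r_div_le gamma_sq_ge by blast
qed

end
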